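(* For all integers $r\ge3$ and $n\ge4$, $\chi_D(K_r^{\times n})=r+1$.
   Context: $K_r$ is the complete graph on $r$ vertices. The weak (direct) product $G\times H$ has vertex set $V(G)\times V(H)$, with $(g_1,h_1)$ adjacent to $(g_2,h_2)$ iff $g_1g_2\in E(G)$ and $h_1h_2\in E(H)$; $K_r^{\times n}$ is the $n$-fold weak product of $K_r$ with itself. A coloring is distinguishing if the only graph automorphism mapping every color class onto itself is the identity; $\chi_D(G)$ is the minimum number of colors of a proper distinguishing coloring of $G$. *)

theory Defs
  imports Main
begin

definition graph_automorphism :: "'a set \<Rightarrow> ('a \<Rightarrow> 'a \<Rightarrow> bool) \<Rightarrow> ('a \<Rightarrow> 'a) \<Rightarrow> bool" where
  "graph_automorphism V E f \<longleftrightarrow>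
     bij_betw f V V \<and> (\<forall>u\<in>V. \<forall>v\<in>V. E u v \<longleftrightarrow> E (f u) (f v))"

definition proper_coloring :: "'a set \<Rightarrow> ('a \<Rightarrow> 'a \<Rightarrow> bool) \<Rightarrow> ('a \<Rightarrow> nat) \<Rightarrow> bool" where
  "proper_coloring V E c \<longleftrightarrow> (\<forall>u\<in>V. \<forall>v\<in>V. E u v \<longrightarrow> c u \<noteq> c v)"

definition distinguishing_coloring :: "'a set \<Rightarrow> ('a \<Rightarrow> 'a \<Rightarrow> bool) \<Rightarrow> ('a \<Rightarrow> nat) \<Rightarrow> bool" where
  "distinguishing_coloring V E c \<longleftrightarrow>
     (\<forall>f. graph_automorphism V E f \<and> (\<forall>v\<in>V. c (f v) = c v) \<longrightarrow> (\<forall>v\<in>V. f v = v))"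

definition dist_chromatic_number :: "'a set \<Rightarrow> ('a \<Rightarrow> 'a \<Rightarrow> bool) \<Rightarrow> nat" where
  "dist_chromatic_number V E =
     (LEAST k. \<exists>c. c ` V \<subseteq> {..<k} \<and> proper_coloring V E c \<and> distinguishing_coloring V E c)"

text \<open>The n-fold weak (direct) product of K_r: vertices are n-tuples over {0..<r},
  two tuples adjacent iff they differ in every coordinate.\<close>
definition Kr_pow_verts :: "nat \<Rightarrow> nat \<Rightarrow> nat list set" where
  "Kr_pow_verts r n = {xs. length xs = n \<and> set xs \<subseteq> {..<r}}"

definition Kr_pow_adj :: "nat \<Rightarrow> nat list \<Rightarrow> nat list \<Rightarrow> bool" where
  "Kr_pow_adj n xs ys \<longleftrightarrow> (\<forall>i<n. xs ! i \<noteq> ys ! i)"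

end

theory Submission
  imports Defs "HOL-Library.FuncSet" "HOL-Combinatorics.Transposition"
begin

text \<open>
  Two vertices at Hamming distance \<open>d\<close> have \<open>(r-1)^(n-d) (r-2)^d\<close>
  common neighbors; for \<open>r \<ge> 3\<close> this determines \<open>d\<close>, so automorphisms preserve Hamming distance.

  Lower bound: let \<open>c\<close> be a proper coloring with \<open>r\<close> colors. If \<open>c\<close> separates \<open>x[0:=a]\<close> from
  \<open>x[0:=b]\<close> for some \<open>x\<close>, then comparing with \<open>(r-2)\<close>-cliques shows that \<open>c\<close> depends on the first
  coordinate only. Either way some coordinate is invisible to \<open>c\<close>, and transposing two values in it is
  a nontrivial color-preserving automorphism.

  Upper bound: color a vertex by its first coordinate, except for a set of \<open>marked\<close> vertices with
  first coordinate 0, which get the new color \<open>r\<close>. The marked vertices are a walk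
  \<open>stair 0, \<dots>, stair L\<close> with steps of Hamming length 1 together with two extra neighbors of
  \<open>stair 0\<close>. A color-preserving automorphism fixes the marked set and preserves Hamming distance,
  hence fixes the fork \<open>stair 0\<close> and then the whole walk; and the first coordinate together with
  the distances to the walk determine every vertex.
\<close>

section \<open>Hamming distance is an invariant\<close>

lemma card_lists_nth_in:
  "card {xs. length xs = n \<and> (\<forall>i<n. xs ! i \<in> A i)} = (\<Prod>i<n. card (A i))"
proof -
  have "bij_betw (\<lambda>xs. restrict ((!) xs) {..<n})
          {xs. length xs = n \<and> (\<forall>i<n. xs ! i \<in> A i)} (\<Pi>\<^sub>E i\<in>{..<n}. A i)"
  proof (rule bij_betw_byWitness[where f' = "\<lambda>g. map g [0..<n]"])
    show "\<forall>xs\<in>{xs. length xs = n \<and> (\<forall>i<n. xs ! i \<in> A i)}. map (restrict ((!) xs) {..<n}) [0..<n] = xs"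
      by (simp add: list_eq_iff_nth_eq)
    show "\<forall>g\<in>\<Pi>\<^sub>E i\<in>{..<n}. A i. restrict ((!) (map g [0..<n])) {..<n} = g"
      by (auto simp: PiE_iff extensional_def restrict_def fun_eq_iff)
    show "(\<lambda>xs. restrict ((!) xs) {..<n}) ` {xs. length xs = n \<and> (\<forall>i<n. xs ! i \<in> A i)} \<subseteq> (\<Pi>\<^sub>E i\<in>{..<n}. A i)"
      by (simp add: image_subset_iff restrict_PiE_iff)
    show "(\<lambda>g. map g [0..<n]) ` (\<Pi>\<^sub>E i\<in>{..<n}. A i) \<subseteq> {xs. length xs = n \<and> (\<forall>i<n. xs ! i \<in> A i)}"
      by (simp add: image_subset_iff PiE_iff)
  qed
  then show ?thesis
    by (simp add: bij_betw_same_card card_PiE)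
qed

lemma mixed_power_less:
  fixes a b :: nat
  assumes "0 < b" "b < a" "d < e" "e \<le> n"
  shows "a ^ (n - e) * b ^ e < a ^ (n - d) * b ^ d"
proof -
  have "a ^ (n - e) * b ^ e = (a ^ (n - e) * b ^ d) * b ^ (e - d)"
    using assms by (simp flip: power_add add: ac_simps)
  also have "\<dots> < (a ^ (n - e) * b ^ d) * a ^ (e - d)"
    using assms by (intro mult_strict_left_mono power_strict_mono) auto
  also have "\<dots> = a ^ (n - d) * b ^ d"
    using assms by (simp flip: power_add add: ac_simps)
  finally show ?thesis .
qed

lemma automorphism_image_common_neighbors:
  assumes f: "graph_automorphism V E f" and "x \<in> V" "y \<in> V"
  shows "f ` {z\<in>V. E x z \<and> E y z} = {z\<in>V. E (f x) z \<and> E (f y) z}"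
proof -
  have fV: "f ` V = V" and E_f: "\<And>u v. u \<in> V \<Longrightarrow> v \<in> V \<Longrightarrow> E u v \<longleftrightarrow> E (f u) (f v)"
    using f unfolding graph_automorphism_def bij_betw_def by auto
  show ?thesis
  proof (intro equalityI subsetI)
    fix z assume "z \<in> {z\<in>V. E (f x) z \<and> E (f y) z}"
    moreover obtain z' where "z' \<in> V" "z = f z'"
      using calculation fV by blast
    ultimately show "z \<in> f ` {z\<in>V. E x z \<and> E y z}"
      using E_f assms(2,3) by auto
  qed (use fV E_f assms(2,3) in auto)
qed

definition hamming_dist :: "nat \<Rightarrow> 'a list \<Rightarrow> 'a list \<Rightarrow> nat" where
  "hamming_dist n x y = card {i. i < n \<and> x ! i \<noteq> y ! i}"

lemma hamming_dist_le: "hamming_dist n x y \<le> n"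
proof -
  have "{i. i < n \<and> x ! i \<noteq> y ! i} \<subseteq> {..<n}"
    by auto
  then show ?thesis
    unfolding hamming_dist_def by (metis card_lessThan card_mono finite_lessThan)
qed

lemma hamming_dist_commute: "hamming_dist n x y = hamming_dist n y x"
  unfolding hamming_dist_def by (rule arg_cong[where f = card]) auto

lemma hamming_dist_self [simp]: "hamming_dist n x x = 0"
  by (simp add: hamming_dist_def)

lemma hamming_dist_split_coord:
  assumes "k < n"
  shows "hamming_dist n x y = card {i. i < n \<and> i \<noteq> k \<and> x ! i \<noteq> y ! i} + of_bool (x ! k \<noteq> y ! k)"
proof (cases "x ! k = y ! k")
  case True
  then have "{i. i < n \<and> x ! i \<noteq> y ! i} = {i. i < n \<and> i \<noteq> k \<and> x ! i \<noteq> y ! i}" by auto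
  then show ?thesis using True by (simp add: hamming_dist_def)
next
  case False
  then have "{i. i < n \<and> x ! i \<noteq> y ! i} = insert k {i. i < n \<and> i \<noteq> k \<and> x ! i \<noteq> y ! i}"
    using assms by auto
  then show ?thesis using False by (simp add: hamming_dist_def)
qed

lemma hamming_dist_eq_1I:
  assumes "k < n" "x ! k \<noteq> y ! k" "\<And>i. i < n \<Longrightarrow> i \<noteq> k \<Longrightarrow> x ! i = y ! i"
  shows "hamming_dist n x y = 1"
  using hamming_dist_split_coord[of k n x y] assms by fastforce

lemma two_le_hamming_dist:
  assumes "i < n" "j < n" "i \<noteq> j" "x ! i \<noteq> y ! i" "x ! j \<noteq> y ! j"
  shows "2 \<le> hamming_dist n x y"
proof -
  have "{i, j} \<subseteq> {i. i < n \<and> x ! i \<noteq> y ! i}" using assms by auto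
  then have "card {i, j} \<le> hamming_dist n x y"
    unfolding hamming_dist_def by (intro card_mono) auto
  then show ?thesis using assms(3) by simp
qed

lemma hamming_dist_change_coord:
  assumes "k < n" "\<And>i. i < n \<Longrightarrow> i \<noteq> k \<Longrightarrow> y ! i = y' ! i"
  shows "hamming_dist n x y + of_bool (x ! k \<noteq> y' ! k) = hamming_dist n x y' + of_bool (x ! k \<noteq> y ! k)"
proof -
  have "{i. i < n \<and> i \<noteq> k \<and> x ! i \<noteq> y ! i} = {i. i < n \<and> i \<noteq> k \<and> x ! i \<noteq> y' ! i}"
    using assms(2) by auto
  then show ?thesis
    using hamming_dist_split_coord[OF assms(1), of x y] hamming_dist_split_coord[OF assms(1), of x y'] by simp
qed

locale Kr_power =
  fixes r n :: nat
  assumes three_le_r: "3 \<le> r"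
begin

abbreviation V :: "nat list set" where "V \<equiv> Kr_pow_verts r n"
abbreviation adj :: "nat list \<Rightarrow> nat list \<Rightarrow> bool" where "adj \<equiv> Kr_pow_adj n"

lemma in_V_iff: "x \<in> V \<longleftrightarrow> length x = n \<and> (\<forall>i<n. x ! i < r)"
  unfolding Kr_pow_verts_def by (auto simp: set_conv_nth)

lemma length_V: "x \<in> V \<Longrightarrow> length x = n"
  by (simp add: in_V_iff)

lemma nth_V_less: "x \<in> V \<Longrightarrow> i < n \<Longrightarrow> x ! i < r"
  by (simp add: in_V_iff)

lemma list_update_in_V: "x \<in> V \<Longrightarrow> a < r \<Longrightarrow> x[j := a] \<in> V"
  by (cases "j < length x") (auto simp: in_V_iff nth_list_update list_update_beyond)

lemma card_common_neighbors:
  assumes x: "x \<in> V" and y: "y \<in> V"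
  shows "card {z\<in>V. adj x z \<and> adj y z}
           = (r - 1) ^ (n - hamming_dist n x y) * (r - 2) ^ hamming_dist n x y"
proof -
  define D where "D = {i. i < n \<and> x ! i \<noteq> y ! i}"
  have common: "{z\<in>V. adj x z \<and> adj y z} = {z. length z = n \<and> (\<forall>i<n. z ! i \<in> {..<r} - {x ! i, y ! i})}"
    unfolding in_V_iff Kr_pow_adj_def by auto
  have "card {z\<in>V. adj x z \<and> adj y z} = (\<Prod>i<n. card ({..<r} - {x ! i, y ! i}))"
    unfolding common by (rule card_lists_nth_in)
  also have "\<dots> = (\<Prod>i\<in>{..<n} - D. card ({..<r} - {x ! i, y ! i})) * (\<Prod>i\<in>D. card ({..<r} - {x ! i, y ! i}))"
    by (rule prod.subset_diff) (auto simp: D_def)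
  also have "\<dots> = (\<Prod>i\<in>{..<n} - D. r - 1) * (\<Prod>i\<in>D. r - 2)"
    using nth_V_less[OF x] nth_V_less[OF y]
    by (intro arg_cong2[where f = "(*)"] prod.cong) (auto simp: D_def card_Diff_subset)
  also have "\<dots> = (r - 1) ^ (n - card D) * (r - 2) ^ card D"
    by (simp add: card_Diff_subset D_def subset_eq)
  finally show ?thesis
    by (simp add: hamming_dist_def D_def)
qed

lemma automorphism_preserves_hamming_dist:
  assumes f: "graph_automorphism V adj f" and x: "x \<in> V" and y: "y \<in> V"
  shows "hamming_dist n (f x) (f y) = hamming_dist n x y"
proof -
  have fx: "f x \<in> V" and fy: "f y \<in> V"
    using f x y unfolding graph_automorphism_def bij_betw_def by auto
  have "inj_on f {z\<in>V. adj x z \<and> adj y z}"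
    using f unfolding graph_automorphism_def bij_betw_def by (auto intro: inj_on_subset)
  then have "card {z\<in>V. adj (f x) z \<and> adj (f y) z} = card {z\<in>V. adj x z \<and> adj y z}"
    unfolding automorphism_image_common_neighbors[OF f x y, symmetric] by (rule card_image)
  then have eq: "(r - 1) ^ (n - hamming_dist n (f x) (f y)) * (r - 2) ^ hamming_dist n (f x) (f y)
                 = (r - 1) ^ (n - hamming_dist n x y) * (r - 2) ^ hamming_dist n x y"
    by (simp only: card_common_neighbors fx fy x y)
  have less: "(r - 1) ^ (n - e) * (r - 2) ^ e < (r - 1) ^ (n - d) * (r - 2) ^ d"
    if "d < e" "e \<le> n" for d e
    using three_le_r that by (intro mixed_power_less) auto
  show ?thesis
    using eq less[of "hamming_dist n x y" "hamming_dist n (f x) (f y)"]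
      less[of "hamming_dist n (f x) (f y)" "hamming_dist n x y"] hamming_dist_le[of n]
    by (cases rule: linorder_cases[of "hamming_dist n x y" "hamming_dist n (f x) (f y)"]) auto
qed

end

section \<open>Colorings with \<open>r\<close> colors are not distinguishing\<close>

lemma proper_coloring_edge_beside_clique:
  assumes c: "proper_coloring V E c" "c ` V \<subseteq> {..<k}"
    and K: "finite K" "K \<subseteq> V" "card K = k - 2" "\<And>u v. u \<in> K \<Longrightarrow> v \<in> K \<Longrightarrow> u \<noteq> v \<Longrightarrow> E u v"
    and pq: "p \<in> V" "q \<in> V" "E p q" "\<And>w. w \<in> K \<Longrightarrow> E p w \<and> E q w"
  shows "{c p, c q} = {..<k} - c ` K"
proof -
  have adj_colors: "c u \<noteq> c v" if "u \<in> V" "v \<in> V" "E u v" for u v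
    using c(1) that unfolding proper_coloring_def by blast
  have "inj_on c K"
  proof (rule inj_onI, rule ccontr)
    fix u v assume "u \<in> K" "v \<in> K" "c u = c v" "u \<noteq> v"
    then show False
      using adj_colors K(2,4) by blast
  qed
  then have card_cK: "card (c ` K) = k - 2"
    using K(3) by (simp add: card_image)
  have "c p \<notin> c ` K" "c q \<notin> c ` K"
    using pq K(2) adj_colors by blast+
  then have sub: "{c p, c q} \<subseteq> {..<k} - c ` K"
    using c(2) pq(1,2) by auto
  have "card {c p, c q} = 2"
    using adj_colors pq(1-3) by simp
  moreover have "card ({..<k} - c ` K) = k - (k - 2)"
    using c(2) K(1,2) card_cK by (subst card_Diff_subset) auto
  ultimately show ?thesis
    using sub card_mono[OF _ sub] by (intro card_subset_eq) auto
qed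

text \<open>\<open>avoiding u v t\<close> is the \<open>t\<close>-th natural number, counted from 0, that differs from \<open>u\<close> and \<open>v\<close>.\<close>

definition avoiding :: "nat \<Rightarrow> nat \<Rightarrow> nat \<Rightarrow> nat" where
  "avoiding u v t = (if t < min u v then t else if t + 1 < max u v then t + 1 else t + 2)"

lemma avoiding_neq: "avoiding u v t \<noteq> u" "avoiding u v t \<noteq> v" "u \<noteq> avoiding u v t" "v \<noteq> avoiding u v t"
  unfolding avoiding_def by auto

lemma avoiding_less: "t + 2 < r \<Longrightarrow> u < r \<Longrightarrow> v < r \<Longrightarrow> avoiding u v t < r"
  unfolding avoiding_def by auto

lemma avoiding_inj: "avoiding u v s = avoiding u v t \<Longrightarrow> s = t"
  unfolding avoiding_def by (auto split: if_splits)

context Kr_power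
begin

lemma coordinate_transposition_automorphism:
  assumes "j < n" "u < r" "v < r"
  shows "graph_automorphism V adj (\<lambda>x. x[j := transpose u v (x ! j)])"
proof -
  let ?f = "\<lambda>x. x[j := transpose u v (x ! j)]"
  have nth_f: "?f x ! i = (if i = j then transpose u v (x ! j) else x ! i)" if "x \<in> V" "i < n" for x i
    using that assms by (simp add: length_V nth_list_update)
  have f_V: "?f x \<in> V" if "x \<in> V" for x
    using that assms nth_V_less[OF that] by (intro list_update_in_V) (auto simp: transpose_def)
  have "bij_betw ?f V V"
    by (rule bij_betw_byWitness[where f' = ?f]) (use f_V assms in \<open>auto simp: length_V\<close>)
  moreover have "adj x y \<longleftrightarrow> adj (?f x) (?f y)" if "x \<in> V" "y \<in> V" for x y
  proof -
    have "?f x ! i = ?f y ! i \<longleftrightarrow> x ! i = y ! i" if "i < n" for i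
      using \<open>x \<in> V\<close> \<open>y \<in> V\<close> that by (simp add: nth_f inj_eq[OF inj_transpose])
    then show ?thesis
      unfolding Kr_pow_adj_def by blast
  qed
  ultimately show ?thesis
    unfolding graph_automorphism_def by blast
qed

lemma clique_beside:
  assumes "0 < n" "u \<in> V" "v \<in> V"
  obtains K where "finite K" "K \<subseteq> V" "card K = r - 2"
    "\<And>s t. s \<in> K \<Longrightarrow> t \<in> K \<Longrightarrow> s \<noteq> t \<Longrightarrow> adj s t"
    "\<And>p w. (\<And>k. k < n \<Longrightarrow> p ! k = u ! k \<or> p ! k = v ! k) \<Longrightarrow> w \<in> K \<Longrightarrow> adj p w"
proof -
  define W where "W t = map (\<lambda>k. avoiding (u ! k) (v ! k) t) [0..<n]" for t
  have nth_W: "W t ! k = avoiding (u ! k) (v ! k) t" if "k < n" for t k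
    using that by (simp add: W_def)
  have W_in_V: "W t \<in> V" if "t < r - 2" for t
    unfolding in_V_iff
  proof (intro conjI allI impI)
    fix k assume "k < n"
    then show "W t ! k < r"
      using that assms(2,3) by (simp add: nth_W avoiding_less nth_V_less)
  qed (simp add: W_def)
  have adj_W: "adj (W s) (W t)" if "s \<noteq> t" for s t
    using that avoiding_inj by (simp add: Kr_pow_adj_def nth_W) blast
  have "inj_on W {..<r - 2}"
    by (intro inj_onI) (metis adj_W Kr_pow_adj_def assms(1))
  show ?thesis
  proof (rule that[of "W ` {..<r - 2}"])
    show "card (W ` {..<r - 2}) = r - 2"
      using \<open>inj_on W {..<r - 2}\<close> by (simp add: card_image)
    show "W ` {..<r - 2} \<subseteq> V"
      using W_in_V by auto
    show "adj s t" if "s \<in> W ` {..<r - 2}" "t \<in> W ` {..<r - 2}" "s \<noteq> t" for s t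
      using that by (auto intro: adj_W)
    show "adj p w" if p: "\<And>k. k < n \<Longrightarrow> p ! k = u ! k \<or> p ! k = v ! k"
      and w: "w \<in> W ` {..<r - 2}" for p w
      unfolding Kr_pow_adj_def
    proof (intro allI impI)
      fix k assume "k < n"
      moreover obtain t where "w = W t"
        using w by blast
      ultimately show "p ! k \<noteq> w ! k"
        using p[OF \<open>k < n\<close>] avoiding_neq by (auto simp: nth_W)
    qed
  qed simp
qed

definition opposite :: "nat list \<Rightarrow> nat list \<Rightarrow> nat list" where
  "opposite x z = map (\<lambda>k. avoiding (x ! k) (z ! k) 0) [0..<n]"

lemma opposite_in_V: "x \<in> V \<Longrightarrow> z \<in> V \<Longrightarrow> opposite x z \<in> V"
  using three_le_r by (auto simp: opposite_def in_V_iff intro!: avoiding_less)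

lemma nth_opposite_neq: "k < n \<Longrightarrow> opposite x z ! k \<noteq> x ! k \<and> opposite x z ! k \<noteq> z ! k"
  by (simp add: opposite_def avoiding_neq)

context
  fixes c :: "nat list \<Rightarrow> nat"
  assumes two_le_n: "2 \<le> n"
    and proper: "proper_coloring V adj c" and few_colors: "c ` V \<subseteq> {..<r}"
begin

lemma colors_transfer_to_opposite:
  assumes x: "x \<in> V" and q: "q \<in> V" and ab: "a < r" "b < r" "a \<noteq> b"
    and opp: "\<And>k. 0 < k \<Longrightarrow> k < n \<Longrightarrow> q ! k \<noteq> x ! k"
    and split: "c (x[0 := a]) \<noteq> c (x[0 := b])"
  shows "c (q[0 := a]) = c (x[0 := a]) \<and> c (q[0 := b]) = c (x[0 := b])"
proof -
  have n_pos: "0 < n"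
    using two_le_n by simp
  have nth_upd: "p[0 := e] ! k = (if k = 0 then e else p ! k)" if "p \<in> V" "k < n" for p e k
    using that n_pos by (simp add: length_V)
  have upd_in_V: "p[0 := e] \<in> V" if "p \<in> V" "e < r" for p e
    using that by (rule list_update_in_V)
  \<comment> \<open>The edges x[0:=a]--q[0:=b] and x[0:=b]--q[0:=a] lie beside one and the same (r-2)-clique,
    so both use exactly the two colors that this clique leaves free.\<close>
  obtain K where K: "finite K" "K \<subseteq> V" "card K = r - 2"
    and K_clique: "\<And>s t. s \<in> K \<Longrightarrow> t \<in> K \<Longrightarrow> s \<noteq> t \<Longrightarrow> adj s t"
    and K_beside: "\<And>p w. (\<And>k. k < n \<Longrightarrow> p ! k = x[0 := a] ! k \<or> p ! k = q[0 := b] ! k) \<Longrightarrow>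
      w \<in> K \<Longrightarrow> adj p w"
    using clique_beside[OF n_pos upd_in_V[OF x ab(1)] upd_in_V[OF q ab(2)]] by blast
  have beside: "adj (p[0 := e]) w" if "p = x \<or> p = q" "e = a \<or> e = b" "w \<in> K" for p e w
    by (rule K_beside[OF _ that(3)]) (use that x q in \<open>auto simp: nth_upd\<close>)
  have cross: "adj (x[0 := e]) (q[0 := e'])" if "e \<noteq> e'" for e e'
    using that x q n_pos by (auto simp: Kr_pow_adj_def nth_upd) (metis opp)
  have "{c (x[0 := a]), c (q[0 := b])} = {..<r} - c ` K"
    by (rule proper_coloring_edge_beside_clique[OF proper few_colors K _
          upd_in_V[OF x ab(1)] upd_in_V[OF q ab(2)] cross[OF ab(3)]]) (simp_all add: K_clique beside)
  moreover have "{c (x[0 := b]), c (q[0 := a])} = {..<r} - c ` K"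
    by (rule proper_coloring_edge_beside_clique[OF proper few_colors K _
          upd_in_V[OF x ab(2)] upd_in_V[OF q ab(1)] cross[OF not_sym[OF ab(3)]]])
      (simp_all add: K_clique beside)
  ultimately show ?thesis
    using split by (metis doubleton_eq_iff)
qed

lemma colors_transfer:
  assumes x: "x \<in> V" and z: "z \<in> V" and ab: "a < r" "b < r" "a \<noteq> b"
    and split: "c (x[0 := a]) \<noteq> c (x[0 := b])"
  shows "c (z[0 := a]) = c (x[0 := a]) \<and> c (z[0 := b]) = c (x[0 := b])"
proof -
  let ?q = "opposite x z"
  have q: "?q \<in> V"
    using x z by (rule opposite_in_V)
  have to_q: "c (?q[0 := a]) = c (x[0 := a]) \<and> c (?q[0 := b]) = c (x[0 := b])"
    using nth_opposite_neq by (intro colors_transfer_to_opposite[OF x q ab _ split]) blast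
  have "z ! k \<noteq> ?q ! k" if "k < n" for k
    using nth_opposite_neq[OF that] by metis
  then have "c (z[0 := a]) = c (?q[0 := a]) \<and> c (z[0 := b]) = c (?q[0 := b])"
    using to_q split by (intro colors_transfer_to_opposite[OF q z ab]) auto
  with to_q show ?thesis
    by simp
qed

lemma color_depends_on_first_coord:
  assumes x: "x \<in> V" and ab: "a < r" "b < r" "a \<noteq> b"
    and split: "c (x[0 := a]) \<noteq> c (x[0 := b])"
    and z: "z \<in> V"
  shows "c z = c (x[0 := z ! 0])"
proof -
  have "c (z[0 := e]) = c (x[0 := e])" if e: "e < r" for e
  proof (cases "e = a")
    case True
    then show ?thesis
      using colors_transfer[OF x z ab split] by blast
  next
    case False
    define w where "w = (opposite x x)[0 := a]"
    have w: "w \<in> V"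
      unfolding w_def using x ab by (intro list_update_in_V opposite_in_V)
    have "c w = c (x[0 := a])"
      using colors_transfer[OF x w ab split] by (simp add: w_def)
    moreover have "adj w (x[0 := e])"
      using x False nth_opposite_neq
      by (auto simp: Kr_pow_adj_def w_def length_V nth_list_update opposite_def)
    ultimately have "c (x[0 := a]) \<noteq> c (x[0 := e])"
      using proper w x e list_update_in_V unfolding proper_coloring_def by metis
    then show ?thesis
      using colors_transfer[OF x z ab(1) e not_sym[OF False]] by blast
  qed
  moreover have "z ! 0 < r"
    using z two_le_n by (simp add: nth_V_less)
  ultimately show ?thesis
    by (metis list_update_id)
qed

lemma color_blind_coordinate:
  "\<exists>j u v. j < n \<and> u < r \<and> v < r \<and> u \<noteq> v \<and> (\<forall>x\<in>V. c (x[j := u]) = c (x[j := v]))"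
proof (cases "\<forall>x\<in>V. c (x[0 := 0]) = c (x[0 := 1])")
  case True
  then show ?thesis
    using two_le_n three_le_r by (intro exI[of _ 0] exI[of _ 0] exI[of _ 1]) auto
next
  case False
  then obtain x where x: "x \<in> V" "c (x[0 := 0]) \<noteq> c (x[0 := 1])"
    by blast
  \<comment> \<open>Now c only sees the first coordinate, so the second one is free.\<close>
  have "c (z[1 := 0]) = c (z[1 := 1])" if "z \<in> V" for z
  proof -
    have "z[1 := e] \<in> V" if "e < r" for e
      using \<open>z \<in> V\<close> that by (rule list_update_in_V)
    then show ?thesis
      using color_depends_on_first_coord[OF x(1) _ _ _ x(2)] three_le_r by simp
  qed
  then show ?thesis
    using two_le_n three_le_r by (intro exI[of _ 1] exI[of _ 0] exI[of _ 1]) auto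
qed

lemma r_coloring_not_distinguishing: "\<not> distinguishing_coloring V adj c"
proof -
  obtain j u v where j: "j < n" "u < r" "v < r" "u \<noteq> v"
    and blind: "\<forall>x\<in>V. c (x[j := u]) = c (x[j := v])"
    using color_blind_coordinate by blast
  define f where "f x = x[j := transpose u v (x ! j)]" for x
  have aut: "graph_automorphism V adj f"
    unfolding f_def by (rule coordinate_transposition_automorphism[OF j(1-3)])
  have "c (f x) = c x" if x: "x \<in> V" for x
  proof (cases "x ! j = u \<or> x ! j = v")
    case True
    have "c (x[j := w]) = c (x[j := u])" if "w = u \<or> w = v" for w
      using that blind x by auto
    moreover have "transpose u v (x ! j) = u \<or> transpose u v (x ! j) = v"
      using True by auto
    ultimately have "c (f x) = c (x[j := x ! j])"
      using True unfolding f_def by metis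
    then show ?thesis
      by simp
  next
    case False
    then show ?thesis
      by (simp add: f_def)
  qed
  moreover have "replicate n u \<in> V"
    using j by (simp add: in_V_iff)
  moreover have "f (replicate n u) ! j \<noteq> replicate n u ! j"
    using j by (simp add: f_def)
  ultimately show ?thesis
    using aut unfolding distinguishing_coloring_def by metis
qed

end

section \<open>A distinguishing coloring with \<open>r + 1\<close> colors\<close>

context
  assumes four_le_n: "4 \<le> n"
begin

abbreviation m :: nat where "m \<equiv> n - 1"
abbreviation L :: nat where "L \<equiv> m * (r - 1)"

lemma three_le_m: "3 \<le> m"
  using four_le_n by simp

text \<open>\<open>stair (Suc j)\<close> arises from \<open>stair j\<close> by raising coordinate \<open>j mod m + 1\<close>, so the walk raises
  the coordinates \<open>1, \<dots>, m\<close> in cyclic order; coordinate \<open>k \<ge> 1\<close> of \<open>stair j\<close> counts the steps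
  \<open>t < j\<close> with \<open>t mod m + 1 = k\<close>, and by step \<open>L\<close> every coordinate has run through all values
  below \<open>r\<close>.\<close>

definition stair :: "nat \<Rightarrow> nat list" where
  "stair j = map (\<lambda>k. if k = 0 then 0 else (j + m - k) div m) [0..<n]"

lemma length_stair [simp]: "length (stair j) = n"
  by (simp add: stair_def)

lemma nth_stair: "k < n \<Longrightarrow> stair j ! k = (if k = 0 then 0 else (j + m - k) div m)"
  by (simp add: stair_def)

lemma step_coord_less: "j mod m + 1 < n"
proof -
  have "j mod m < m"
    using three_le_m by simp
  then show ?thesis
    by linarith
qed

lemma nth_stair_Suc:
  assumes k: "k < n"
  shows "stair (Suc j) ! k = stair j ! k + of_bool (k = j mod m + 1)"
proof (cases "k = 0")
  case True
  then show ?thesis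
    using k by (simp add: nth_stair)
next
  case False
  have m_pos: "0 < m"
    using three_le_m by simp
  define t where "t = j mod m + 1 + m - k"
  have "j mod m < m"
    using m_pos by simp
  then have t: "0 < t" "t < 2 * m"
    using False k unfolding t_def by linarith+
  have "Suc (j + m - k) = t + j div m * m"
    using div_mult_mod_eq[of j m] False k by (simp add: t_def)
  then have "Suc (j + m - k) mod m = t mod m"
    by simp
  also have "t mod m = 0 \<longleftrightarrow> t = m"
    using t by (cases "t < m") (auto simp: le_mod_geq)
  finally have "Suc (j + m - k) mod m = 0 \<longleftrightarrow> k = j mod m + 1"
    using False k by (auto simp: t_def)
  moreover have "Suc j + m - k = Suc (j + m - k)"
    using False k by simp
  ultimately show ?thesis
    using False k by (simp add: nth_stair div_Suc)
qed

lemma nth_stair_mono: "j \<le> j' \<Longrightarrow> k < n \<Longrightarrow> stair j ! k \<le> stair j' ! k"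
  by (induction j' rule: dec_induct) (auto simp: nth_stair_Suc)

lemma hamming_stair_Suc: "hamming_dist n (stair j) (stair (Suc j)) = 1"
proof (rule hamming_dist_eq_1I[OF step_coord_less])
  show "stair j ! (j mod m + 1) \<noteq> stair (Suc j) ! (j mod m + 1)"
    using nth_stair_Suc[of "j mod m + 1" j] step_coord_less by simp
  show "stair j ! i = stair (Suc j) ! i" if "i < n" "i \<noteq> j mod m + 1" for i
    using nth_stair_Suc[of i j] that by simp
qed

lemma two_le_hamming_stair:
  assumes "j + 2 \<le> k"
  shows "2 \<le> hamming_dist n (stair j) (stair k)"
proof -
  have changes: "stair j ! (i mod m + 1) < stair k ! (i mod m + 1)" if "j \<le> i" "i < k" for i
  proof -
    have "stair j ! (i mod m + 1) \<le> stair i ! (i mod m + 1)"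
      using that by (intro nth_stair_mono step_coord_less)
    also have "\<dots> < stair (Suc i) ! (i mod m + 1)"
      using step_coord_less by (simp add: nth_stair_Suc)
    also have "\<dots> \<le> stair k ! (i mod m + 1)"
      using that by (intro nth_stair_mono step_coord_less) auto
    finally show ?thesis .
  qed
  have "j mod m \<noteq> Suc j mod m"
    using three_le_m by (simp add: mod_Suc)
  then show ?thesis
    using assms changes[of j] changes[of "Suc j"] step_coord_less
    by (intro two_le_hamming_dist[of "j mod m + 1" _ "Suc j mod m + 1"]) auto
qed

lemma hamming_stair_eq_1D:
  assumes "hamming_dist n (stair j) (stair k) = 1"
  shows "k = Suc j \<or> j = Suc k"
proof -
  have "\<not> j + 2 \<le> k"
    using assms two_le_hamming_stair[of j k] by auto
  moreover have "\<not> k + 2 \<le> j"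
    using assms two_le_hamming_stair[of k j] by (auto simp: hamming_dist_commute)
  moreover have "j \<noteq> k"
    using assms by auto
  ultimately show ?thesis
    by linarith
qed

lemma stair_inj:
  assumes "stair j = stair k"
  shows "j = k"
proof (rule ccontr)
  assume "j \<noteq> k"
  then consider "k = Suc j" | "j = Suc k" | "j + 2 \<le> k" | "k + 2 \<le> j"
    by linarith
  then show False
    using assms hamming_stair_Suc[of j] hamming_stair_Suc[of k]
      two_le_hamming_stair[of j k] two_le_hamming_stair[of k j]
    by cases auto
qed

lemma stair_in_V:
  assumes "j \<le> L"
  shows "stair j \<in> V"
  unfolding in_V_iff
proof (intro conjI allI impI)
  fix k assume k: "k < n"
  show "stair j ! k < r"
  proof (cases "k = 0")
    case False
    then have "j + m - k < L + m"
      using assms k by linarith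
    also have "L + m = m * Suc (r - 1)"
      by (simp only: mult_Suc_right add.commute)
    also have "\<dots> = r * m"
      using three_le_r by (simp add: mult.commute)
    finally have "(j + m - k) div m < r"
      by (rule less_mult_imp_div_less)
    then show ?thesis
      using k False by (simp add: nth_stair)
  qed (use k three_le_r in \<open>simp add: nth_stair\<close>)
qed simp

definition spike :: "nat \<Rightarrow> nat list" where
  "spike v = (replicate n 0)[m := v]"

lemma nth_spike: "k < n \<Longrightarrow> spike v ! k = (if k = m then v else 0)"
  using four_le_n by (simp add: spike_def nth_list_update)

lemma spike_in_V: "v < r \<Longrightarrow> spike v \<in> V"
  unfolding spike_def using three_le_r by (intro list_update_in_V) (simp_all add: in_V_iff)

lemma hamming_stair_0_spike: "v \<noteq> 0 \<Longrightarrow> hamming_dist n (stair 0) (spike v) = 1"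
  using four_le_n by (intro hamming_dist_eq_1I[of m]) (auto simp: nth_stair nth_spike)

lemma two_le_hamming_spike_stair:
  assumes "1 \<le> j" "v \<noteq> 0"
  shows "2 \<le> hamming_dist n (spike v) (stair j)"
proof -
  have "0 < (j + m - 1) div m"
    by (subst div_greater_zero_iff) (use assms three_le_m in auto)
  then have coord_1: "spike v ! 1 \<noteq> stair j ! 1"
    using three_le_m by (simp add: nth_spike nth_stair)
  show ?thesis
  proof (cases "j < m")
    case True
    then have "spike v ! m \<noteq> stair j ! m"
      using assms three_le_m by (simp add: nth_spike nth_stair)
    then show ?thesis
      using coord_1 three_le_m by (intro two_le_hamming_dist[of 1 _ m]) auto
  next
    case False
    then have "0 < (j + m - 2) div m"
      by (subst div_greater_zero_iff) (use three_le_m in auto)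
    then have "spike v ! 2 \<noteq> stair j ! 2"
      using three_le_m by (simp add: nth_spike nth_stair)
    then show ?thesis
      using coord_1 three_le_m by (intro two_le_hamming_dist[of 1 _ 2]) auto
  qed
qed

definition marked :: "nat list set" where
  "marked = stair ` {..L} \<union> {spike 1, spike 2}"

lemma two_le_L: "2 \<le> L"
proof -
  have "3 * 2 \<le> m * (r - 1)"
    using three_le_m three_le_r by (intro mult_le_mono) auto
  then show ?thesis
    by simp
qed

lemma stair_in_marked: "j \<le> L \<Longrightarrow> stair j \<in> marked"
  by (simp add: marked_def)

lemma marked_subset_V: "marked \<subseteq> V"
  using three_le_r by (auto simp: marked_def stair_in_V spike_in_V)

lemma nth_0_marked: "s \<in> marked \<Longrightarrow> s ! 0 = 0"
  using four_le_n by (auto simp: marked_def nth_stair nth_spike)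

text \<open>Under Hamming distance 1, \<open>marked\<close> is the path \<open>stair 0, \<dots>, stair L\<close> with the two
  leaves \<open>spike 1\<close> and \<open>spike 2\<close> attached at \<open>stair 0\<close>.\<close>

definition marked_nbrs :: "nat list \<Rightarrow> nat list set" where
  "marked_nbrs x = {s \<in> marked. hamming_dist n x s = 1}"

lemma finite_marked_nbrs: "finite (marked_nbrs x)"
  by (simp add: marked_nbrs_def marked_def)

lemma marked_nbrs_stair_0: "marked_nbrs (stair 0) = {stair 1, spike 1, spike 2}"
proof -
  have "stair 1 \<in> marked"
    using two_le_L by (intro stair_in_marked) linarith
  moreover have "stair k \<in> marked_nbrs (stair 0) \<longleftrightarrow> k = 1" if "k \<le> L" for k
    using hamming_stair_eq_1D[of 0 k] hamming_stair_Suc[of 0] that two_le_L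
    by (auto simp: marked_nbrs_def marked_def)
  ultimately show ?thesis
    using hamming_stair_0_spike hamming_stair_Suc[of 0]
    by (auto simp: marked_nbrs_def marked_def)
qed

lemma marked_nbrs_stair:
  assumes "0 < j"
  shows "marked_nbrs (stair j) \<subseteq> {stair (j - 1), stair (Suc j)}"
proof
  fix s assume s: "s \<in> marked_nbrs (stair j)"
  then consider k where "s = stair k" | v where "v \<in> {1, 2}" "s = spike v"
    by (auto simp: marked_nbrs_def marked_def)
  then show "s \<in> {stair (j - 1), stair (Suc j)}"
  proof cases
    case 1
    then show ?thesis
      using s hamming_stair_eq_1D[of j k] by (auto simp: marked_nbrs_def)
  next
    case 2
    then show ?thesis
      using s assms two_le_hamming_spike_stair[of j v] hamming_dist_commute[of n "spike v" "stair j"]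
      by (auto simp: marked_nbrs_def)
  qed
qed

lemma spike_neq_stair: "v \<noteq> 0 \<Longrightarrow> spike v \<noteq> stair j"
  using two_le_hamming_spike_stair[of j v] hamming_stair_0_spike[of v]
  by (cases j) (auto simp: hamming_dist_commute)

lemma spike_inj: "spike v = spike w \<Longrightarrow> v = w"
  using four_le_n nth_spike[of m v] nth_spike[of m w] by simp

lemma marked_nbrs_spike:
  assumes "v \<in> {1, 2}"
  shows "marked_nbrs (spike v) \<subseteq> {stair 0, spike (3 - v)}"
proof
  fix s assume s: "s \<in> marked_nbrs (spike v)"
  then consider k where "s = stair k" | w where "w \<in> {1, 2}" "s = spike w"
    by (auto simp: marked_nbrs_def marked_def)
  then show "s \<in> {stair 0, spike (3 - v)}"
  proof cases
    case 1
    then show ?thesis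
      using s assms two_le_hamming_spike_stair[of k v] by (cases k) (auto simp: marked_nbrs_def)
  next
    case 2
    then show ?thesis
      using s assms by (auto simp: marked_nbrs_def)
  qed
qed

lemma card_marked_nbrs_ge_3_iff:
  assumes "x \<in> marked"
  shows "3 \<le> card (marked_nbrs x) \<longleftrightarrow> x = stair 0"
proof
  assume "x = stair 0"
  moreover have "spike 1 \<noteq> spike 2"
    using spike_inj by force
  ultimately show "3 \<le> card (marked_nbrs x)"
    using spike_neq_stair[of 1 1] spike_neq_stair[of 2 1] by (simp add: marked_nbrs_stair_0)
next
  assume three: "3 \<le> card (marked_nbrs x)"
  show "x = stair 0"
  proof (rule ccontr)
    assume x0: "x \<noteq> stair 0"
    obtain a b where ab: "marked_nbrs x \<subseteq> {a, b}"
    proof -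
      from assms consider j where "x = stair j" | v where "v \<in> {1, 2}" "x = spike v"
        by (auto simp: marked_def)
      then show thesis
      proof cases
        case (1 j)
        with x0 show thesis
          using marked_nbrs_stair[of j] that by blast
      next
        case (2 v)
        then show thesis
          using marked_nbrs_spike that by blast
      qed
    qed
    have "card (marked_nbrs x) \<le> card {a, b}"
      using ab by (rule card_mono[rotated]) simp
    also have "\<dots> \<le> 2"
      by (simp add: card_insert_if)
    finally show False
      using three by simp
  qed
qed

definition marking_coloring :: "nat list \<Rightarrow> nat" where
  "marking_coloring x = (if x \<in> marked then r else x ! 0)"

lemma marking_coloring_range: "marking_coloring ` V \<subseteq> {..<r + 1}"
  using four_le_n by (auto simp: marking_coloring_def less_Suc_eq nth_V_less)

lemma marking_coloring_proper: "proper_coloring V adj marking_coloring"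
  unfolding proper_coloring_def
proof (intro ballI impI)
  fix x y assume "x \<in> V" "y \<in> V" "adj x y"
  then have "x ! 0 \<noteq> y ! 0" "x ! 0 < r" "y ! 0 < r"
    using four_le_n by (auto simp: Kr_pow_adj_def nth_V_less)
  then show "marking_coloring x \<noteq> marking_coloring y"
    using nth_0_marked by (auto simp: marking_coloring_def)
qed

lemma marking_coloring_eq_r_iff: "x \<in> V \<Longrightarrow> marking_coloring x = r \<longleftrightarrow> x \<in> marked"
  using four_le_n nth_V_less[of x 0] by (auto simp: marking_coloring_def)

lemma stair_step_raising_coord:
  assumes k: "0 < k" "k < n" and w: "1 \<le> w"
  defines "j \<equiv> (k - 1) + (w - 1) * m"
  shows "stair j ! k = w - 1" "stair (Suc j) ! k = w"
    and "\<And>i. i < n \<Longrightarrow> i \<noteq> k \<Longrightarrow> stair j ! i = stair (Suc j) ! i"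
proof -
  have "j mod m = (k - 1) mod m"
    by (simp only: j_def mod_mult_self1)
  then have step: "j mod m + 1 = k"
    using k by simp
  have "j + m - k = (m - 1) + (w - 1) * m"
    using k unfolding j_def by linarith
  then have "(j + m - k) div m = (w - 1) + (m - 1) div m"
    using three_le_m by (simp only: div_mult_self1)
  also have "(m - 1) div m = 0"
    using three_le_m by (intro div_less) simp
  finally show j_k: "stair j ! k = w - 1"
    using k nth_stair[of k j] by simp
  show "stair (Suc j) ! k = w"
    using j_k k w step by (simp add: nth_stair_Suc)
  show "stair j ! i = stair (Suc j) ! i" if "i < n" "i \<noteq> k" for i
    using that step by (simp add: nth_stair_Suc)
qed

lemma coord_from_stair_distances:
  assumes x: "x \<in> V" and y: "y \<in> V"
    and dist: "\<And>j. j \<le> L \<Longrightarrow> hamming_dist n x (stair j) = hamming_dist n y (stair j)"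
    and k: "0 < k" "k < n" and x_k: "1 \<le> x ! k"
  shows "y ! k = x ! k"
proof -
  define j where "j = (k - 1) + (x ! k - 1) * m"
  note step = stair_step_raising_coord[OF k x_k, folded j_def]
  have "Suc j \<le> L"
  proof -
    have "x ! k < r"
      using x k by (simp add: nth_V_less)
    then have "x ! k * m \<le> (r - 1) * m"
      by (intro mult_le_mono1) simp
    moreover have "Suc j \<le> x ! k * m"
      using k x_k by (cases "x ! k") (auto simp: j_def)
    ultimately show ?thesis
      by (metis mult.commute order_trans)
  qed
  then show ?thesis
    using hamming_dist_change_coord[OF k(2) step(3), of x] hamming_dist_change_coord[OF k(2) step(3), of y]
      dist[of j] dist[of "Suc j"] x_k step(1,2)
    by (auto simp: of_bool_def split: if_splits)
qed

lemma stair_distances_determine: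
  assumes x: "x \<in> V" and y: "y \<in> V" and "x ! 0 = y ! 0"
    and dist: "\<And>j. j \<le> L \<Longrightarrow> hamming_dist n x (stair j) = hamming_dist n y (stair j)"
  shows "x = y"
proof (rule nth_equalityI)
  show "length x = length y"
    using x y by (simp add: length_V)
  fix k assume "k < length x"
  then have k: "k < n"
    using x by (simp add: length_V)
  show "x ! k = y ! k"
  proof (cases "k = 0")
    case False
    have dist': "hamming_dist n y (stair j) = hamming_dist n x (stair j)" if "j \<le> L" for j
      using dist[OF that] by simp
    consider "1 \<le> x ! k" | "1 \<le> y ! k" | "x ! k = 0" "y ! k = 0"
      by linarith
    then show ?thesis
      by cases (use False coord_from_stair_distances[OF x y dist _ k]
          coord_from_stair_distances[OF y x dist' _ k] in auto)
  qed (use assms in simp)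
qed

context
  fixes f :: "nat list \<Rightarrow> nat list"
  assumes aut: "graph_automorphism V adj f"
    and keeps_colors: "\<forall>x\<in>V. marking_coloring (f x) = marking_coloring x"
begin

lemma aut_in_V: "x \<in> V \<Longrightarrow> f x \<in> V"
  using aut unfolding graph_automorphism_def bij_betw_def by auto

lemma aut_inj: "x \<in> V \<Longrightarrow> y \<in> V \<Longrightarrow> f x = f y \<Longrightarrow> x = y"
  using aut unfolding graph_automorphism_def bij_betw_def inj_on_def by auto

lemma aut_hamming_dist: "x \<in> V \<Longrightarrow> y \<in> V \<Longrightarrow> hamming_dist n (f x) (f y) = hamming_dist n x y"
  using aut by (rule automorphism_preserves_hamming_dist)

lemma aut_marked_iff:
  assumes "x \<in> V"
  shows "f x \<in> marked \<longleftrightarrow> x \<in> marked"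
  using keeps_colors assms marking_coloring_eq_r_iff[OF assms] marking_coloring_eq_r_iff[OF aut_in_V[OF assms]]
  by simp

lemma aut_nth_0:
  assumes "x \<in> V"
  shows "f x ! 0 = x ! 0"
  using keeps_colors assms aut_marked_iff[OF assms] nth_0_marked marked_subset_V
  by (auto simp: marking_coloring_def)

lemma aut_marked_nbrs:
  assumes "x \<in> marked"
  shows "f ` marked_nbrs x \<subseteq> marked_nbrs (f x)"
proof
  fix s assume "s \<in> f ` marked_nbrs x"
  then obtain t where t: "t \<in> marked" "hamming_dist n x t = 1" "s = f t"
    by (auto simp: marked_nbrs_def)
  then have "t \<in> V" "x \<in> V"
    using assms marked_subset_V by auto
  then show "s \<in> marked_nbrs (f x)"
    using t aut_marked_iff aut_hamming_dist by (simp add: marked_nbrs_def)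
qed

lemma aut_fixes_stair_0: "f (stair 0) = stair 0"
proof -
  have marked: "stair 0 \<in> marked"
    by (simp add: marked_def)
  have "inj_on f (marked_nbrs (stair 0))"
    using marked_subset_V aut_inj by (auto simp: marked_nbrs_def inj_on_def)
  then have "card (marked_nbrs (stair 0)) \<le> card (marked_nbrs (f (stair 0)))"
    using aut_marked_nbrs[OF marked] by (metis card_image card_mono finite_marked_nbrs)
  moreover have "3 \<le> card (marked_nbrs (stair 0))"
    using card_marked_nbrs_ge_3_iff[OF marked] by simp
  moreover have "f (stair 0) \<in> marked"
    using aut_marked_iff marked marked_subset_V by blast
  ultimately show ?thesis
    using card_marked_nbrs_ge_3_iff by fastforce
qed

lemma aut_maps_marked_nbr:
  assumes "x \<in> marked" "y \<in> marked" "hamming_dist n x y = 1"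
  shows "f y \<in> marked_nbrs (f x)"
  using assms aut_marked_nbrs[of x] by (auto simp: marked_nbrs_def)

lemma aut_fixes_stair_1: "f (stair 1) = stair 1"
proof -
  have marked: "stair j \<in> marked" if "j \<le> 2" for j
    using that two_le_L by (intro stair_in_marked) simp
  have "f (stair 1) \<in> marked_nbrs (stair 0)"
    using aut_maps_marked_nbr[OF marked marked, of 0 1] hamming_stair_Suc[of 0] aut_fixes_stair_0
    by simp
  moreover have "f (stair 1) \<notin> {spike 1, spike 2}"
  proof
    assume "f (stair 1) \<in> {spike 1, spike 2}"
    moreover have "f (stair 2) \<in> marked_nbrs (f (stair 1))"
      using aut_maps_marked_nbr[OF marked marked, of 1 2] hamming_stair_Suc[of 1]
      by (simp add: numeral_2_eq_2)
    ultimately have "f (stair 2) \<in> {stair 0, spike 1, spike 2}"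
      using marked_nbrs_spike[of 1] marked_nbrs_spike[of 2] by auto
    moreover have "2 \<le> hamming_dist n (f (stair 2)) (stair 0)"
    proof -
      have "stair 2 \<in> V" "stair 0 \<in> V"
        using two_le_L by (simp_all add: stair_in_V)
      then have "hamming_dist n (f (stair 2)) (stair 0) = hamming_dist n (stair 2) (stair 0)"
        using aut_hamming_dist aut_fixes_stair_0 by metis
      then show ?thesis
        using two_le_hamming_stair[of 0 2] hamming_dist_commute[of n "stair 0"] by simp
    qed
    ultimately show False
      using hamming_stair_0_spike[of 1] hamming_stair_0_spike[of 2]
        hamming_dist_commute[of n "stair 0"] by auto
  qed
  ultimately show ?thesis
    by (auto simp: marked_nbrs_stair_0)
qed

lemma aut_fixes_stair: "j \<le> L \<Longrightarrow> f (stair j) = stair j"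
proof (induction j rule: less_induct)
  case (less j)
  consider "j = 0" | "j = 1" | i where "j = Suc (Suc i)"
    by (metis One_nat_def not0_implies_Suc)
  then show ?case
  proof cases
    case 3
    have IH: "f (stair i) = stair i" "f (stair (Suc i)) = stair (Suc i)"
      using less 3 by auto
    have "f (stair j) \<in> marked_nbrs (stair (Suc i))"
      using aut_maps_marked_nbr[of "stair (Suc i)" "stair j"] hamming_stair_Suc[of "Suc i"]
        stair_in_marked less.prems 3 IH(2) by simp
    then have "f (stair j) \<in> {stair i, stair j}"
      using marked_nbrs_stair[of "Suc i"] 3 by auto
    moreover have "f (stair j) \<noteq> f (stair i)"
    proof
      assume "f (stair j) = f (stair i)"
      then have "stair j = stair i"
        using aut_inj stair_in_V less.prems 3 by simp
      then show False
        using stair_inj 3 by force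
    qed
    ultimately show ?thesis
      using IH by auto
  qed (use aut_fixes_stair_0 aut_fixes_stair_1 in auto)
qed

lemma aut_eq_id: "x \<in> V \<Longrightarrow> f x = x"
  using aut_in_V aut_nth_0 aut_hamming_dist aut_fixes_stair stair_in_V
  by (metis stair_distances_determine)

end

lemma marking_coloring_distinguishing: "distinguishing_coloring V adj marking_coloring"
  unfolding distinguishing_coloring_def using aut_eq_id by blast

end

end

theorem mainTheorem7:
  fixes r n :: nat
  assumes "r \<ge> 3" and "n \<ge> 4"
  shows "dist_chromatic_number (Kr_pow_verts r n) (Kr_pow_adj n) = r + 1"
proof -
  have r: "Kr_power r"
    using assms(1) by (rule Kr_power.intro)
  let ?V = "Kr_pow_verts r n" and ?E = "Kr_pow_adj n"
  have "\<exists>c. c ` ?V \<subseteq> {..<r + 1} \<and> proper_coloring ?V ?E c \<and> distinguishing_coloring ?V ?E c"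
    using Kr_power.marking_coloring_range[OF r assms(2)] Kr_power.marking_coloring_proper[OF r assms(2)]
      Kr_power.marking_coloring_distinguishing[OF r assms(2)] by blast
  moreover have "r + 1 \<le> k"
    if "c ` ?V \<subseteq> {..<k}" "proper_coloring ?V ?E c" "distinguishing_coloring ?V ?E c" for c k
  proof (rule ccontr)
    assume "\<not> r + 1 \<le> k"
    then have "c ` ?V \<subseteq> {..<r}"
      using that(1) by auto
    then show False
      using Kr_power.r_coloring_not_distinguishing[OF r _ that(2)] that(3) assms(2) by simp
  qed
  ultimately show ?thesis
    unfolding dist_chromatic_number_def by (intro Least_equality) auto
qed

end
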